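(* Let $d=3$ and let $\mathbf{u}\in C^1([0,T);V^m)$, $m\ge1$, be a strong solution of the Euler equations on $\mathbb{\Lambda}^3$. Let $\mathbf{h}\in C^1([0,T);V^m)$ be a divergence-free field satisfying $\partial_t\mathbf{h}+\mathbf{u}\ast\nabla\mathbf{h}-\mathbf{h}\ast\nabla\mathbf{u}=\mathbf{0}$ for all $\mathbf{k}\neq\mathbf{0}$ and $t\in[0,T)$. Then the cross-correlation $\Gamma(t)=(\mathbf{u},\mathbf{h})$ is constant in $t\in[0,T)$.
   Context: Let $\lambda$ be one of: $2$; the plastic number $\sigma$ (unique real root of $x^3-x-1=0$); or $\lambda>1$ with $\lambda^b-\lambda^a=1$ for mutually prime integers $0\le a<b\le62$, $(a,b)\notin\{(1,3),(4,5)\}$. Let $\mathbb{\Lambda}=\{0\}\cup\{\pm\lambda^n:n=0,1,2,\dots\}$. Fields on $\mathbb{\Lambda}^3$ satisfy $f(-\mathbf{k})=\overline{f(\mathbf{k})}$. Derivatives $(\partial_jf)(\mathbf{k})=ik_jf(\mathbf{k})$, $(\nabla p)(\mathbf{k})=i\mathbf{k}p(\mathbf{k})$, $(\nabla\cdot\mathbf{u})(\mathbf{k})=i\mathbf{k}\cdot\mathbf{u}(\mathbf{k})$. Inner product $(\mathbf{u},\mathbf{h})=\sum_{\mathbf{k}}\sum_i u_i(\mathbf{k})\overline{h_i(\mathbf{k})}$. Product $(f\ast g)(\mathbf{k})=\sum_{\mathbf{p}+\mathbf{q}=\mathbf{k},\,\mathbf{p},\mathbf{q}\in\mathbb{\Lambda}^3}f(\mathbf{p})g(\mathbf{q})$;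 $(\mathbf{a}\ast\nabla\mathbf{b})_i=\sum_j a_j\ast\partial_jb_i$. For integer $m\ge0$, $\|\mathbf{u}\|_{h^m}^2=\sum_{\mathbf{k}\neq\mathbf{0}}|\mathbf{k}|^{2m}|\mathbf{u}(\mathbf{k})|^2$; $V^m$ is the space of fields with $\mathbf{u}(\mathbf{0})=\mathbf{0}$, $\nabla\cdot\mathbf{u}=0$ and finite $h^m$ norm. A strong solution of the Euler equations on $[0,T)$ is $\mathbf{u}\in C^1([0,T);V^m)$ together with a scalar field $p(\cdot,t)$ such that $\partial_t\mathbf{u}+\mathbf{u}\ast\nabla\mathbf{u}=-\nabla p$ holds for all $\mathbf{k}\neq\mathbf{0}$ and $t\in[0,T)$. *)

theory Defs
  imports "HOL-Analysis.Analysis"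
begin

definition admissible_lambda :: "real \<Rightarrow> bool" where
  "admissible_lambda lam \<longleftrightarrow>
     lam = 2
   \<or> lam ^ 3 - lam - 1 = 0
   \<or> (\<exists>a b :: nat. coprime a b \<and> a < b \<and> b \<le> 62 \<and> (a, b) \<notin> {(1, 3), (4, 5)}
                   \<and> lam > 1 \<and> lam ^ b - lam ^ a = 1)"

definition Lam :: "real \<Rightarrow> real set" where
  "Lam lam = {0} \<union> {x. \<exists>n::nat. x = lam ^ n \<or> x = - (lam ^ n)}"

definition Lam3 :: "real \<Rightarrow> (real^3) set" where
  "Lam3 lam = {k. \<forall>i. k $ i \<in> Lam lam}"

text \<open>Vector fields on the lattice: functions real^3 => complex^3 (only values on Lam3 matter);
  scalar fields: real^3 => complex.\<close>

definition reality_vec :: "real \<Rightarrow> (real^3 \<Rightarrow> complex^3) \<Rightarrow> bool" where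
  "reality_vec lam u \<longleftrightarrow> (\<forall>k \<in> Lam3 lam. u (- k) = (\<chi> i. cnj (u k $ i)))"

definition reality_scal :: "real \<Rightarrow> (real^3 \<Rightarrow> complex) \<Rightarrow> bool" where
  "reality_scal lam f \<longleftrightarrow> (\<forall>k \<in> Lam3 lam. f (- k) = cnj (f k))"

definition conv :: "real \<Rightarrow> (real^3 \<Rightarrow> complex) \<Rightarrow> (real^3 \<Rightarrow> complex) \<Rightarrow> real^3 \<Rightarrow> complex" where
  "conv lam f g k = (\<Sum>\<^sub>\<infinity>p \<in> {p \<in> Lam3 lam. k - p \<in> Lam3 lam}. f p * g (k - p))"

text \<open>(a * grad b)_i = sum_j a_j * (partial_j b_i), with (partial_j f)(k) = i k_j f(k).\<close>
definition adv :: "real \<Rightarrow> (real^3 \<Rightarrow> complex^3) \<Rightarrow> (real^3 \<Rightarrow> complex^3) \<Rightarrow> real^3 \<Rightarrow> complex^3" where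
  "adv lam a b k = (\<chi> i. \<Sum>j\<in>UNIV. conv lam (\<lambda>p. a p $ j) (\<lambda>q. \<i> * complex_of_real (q $ j) * (b q $ i)) k)"

definition divergence :: "(real^3 \<Rightarrow> complex^3) \<Rightarrow> real^3 \<Rightarrow> complex" where
  "divergence u k = \<i> * (\<Sum>j\<in>UNIV. complex_of_real (k $ j) * u k $ j)"

definition grad :: "(real^3 \<Rightarrow> complex) \<Rightarrow> real^3 \<Rightarrow> complex^3" where
  "grad p k = (\<chi> j. \<i> * complex_of_real (k $ j) * p k)"

definition inner_field :: "real \<Rightarrow> (real^3 \<Rightarrow> complex^3) \<Rightarrow> (real^3 \<Rightarrow> complex^3) \<Rightarrow> complex" where
  "inner_field lam u h = (\<Sum>\<^sub>\<infinity>k \<in> Lam3 lam. \<Sum>i\<in>UNIV. u k $ i * cnj (h k $ i))"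

definition hm_summand :: "nat \<Rightarrow> (real^3 \<Rightarrow> complex^3) \<Rightarrow> real^3 \<Rightarrow> real" where
  "hm_summand m u k = norm k ^ (2 * m) * (norm (u k))\<^sup>2"

definition hm_finite :: "real \<Rightarrow> nat \<Rightarrow> (real^3 \<Rightarrow> complex^3) \<Rightarrow> bool" where
  "hm_finite lam m u \<longleftrightarrow> hm_summand m u summable_on (Lam3 lam - {0})"

definition hm_norm :: "real \<Rightarrow> nat \<Rightarrow> (real^3 \<Rightarrow> complex^3) \<Rightarrow> real" where
  "hm_norm lam m u = sqrt (\<Sum>\<^sub>\<infinity>k \<in> Lam3 lam - {0}. hm_summand m u k)"

definition Vm :: "real \<Rightarrow> nat \<Rightarrow> (real^3 \<Rightarrow> complex^3) \<Rightarrow> bool" where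
  "Vm lam m u \<longleftrightarrow> reality_vec lam u \<and> u 0 = 0
     \<and> (\<forall>k \<in> Lam3 lam. divergence u k = 0) \<and> hm_finite lam m u"

definition time_int :: "ereal \<Rightarrow> real set" where
  "time_int T = {t. 0 \<le> t \<and> ereal t < T}"

definition C1_Vm :: "real \<Rightarrow> nat \<Rightarrow> ereal \<Rightarrow> (real \<Rightarrow> real^3 \<Rightarrow> complex^3)
                      \<Rightarrow> (real \<Rightarrow> real^3 \<Rightarrow> complex^3) \<Rightarrow> bool" where
  "C1_Vm lam m T u u' \<longleftrightarrow>
    (\<forall>t \<in> time_int T.
       Vm lam m (u t) \<and> Vm lam m (u' t)
     \<and> ((\<lambda>s. hm_norm lam m (\<lambda>k. (u s k - u t k) /\<^sub>R (s - t) - u' t k)) \<longlongrightarrow> 0)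
          (at t within time_int T)
     \<and> ((\<lambda>s. hm_norm lam m (\<lambda>k. u' s k - u' t k)) \<longlongrightarrow> 0) (at t within time_int T))"

end

theory Submission
  imports Defs
begin

text \<open>
  Differentiate \<open>\<Gamma>(t) = (u, h)\<close> and substitute the two equations. The pressure term vanishes
  because \<open>h\<close> is divergence free, and what remains are sums over the triads \<open>k = p + q\<close> of
  \<open>\<Lambda>\<^sup>3\<close>. Since \<open>\<Lambda>\<^sup>3 = -\<Lambda>\<^sup>3\<close>, the maps \<open>(k, p) \<mapsto> (k - p, -p)\<close> and \<open>(k, p) \<mapsto> (p - k, p)\<close>
  are involutions of the set of triads; together with incompressibility and the reality
  condition they show that \<open>(u * \<nabla>u, h)\<close> cancels the conjugate of \<open>(u * \<nabla>h, u)\<close> and that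
  \<open>(h * \<nabla>u, u) = 0\<close>. Hence \<open>\<Gamma>' = 0\<close>. These rearrangements need absolute convergence of the
  triad sums, which holds because fields in \<open>V\<^sup>m\<close>, \<open>m \<ge> 1\<close>, are summable: \<open>\<Sum> |k|\<^sup>-\<^sup>2\<close> converges
  on the logarithmic lattice, being dominated by a product of three geometric series.
\<close>

section \<open>Infinite sums and limits\<close>

lemma mult_le_sum_squares: "(x::real) * y \<le> x\<^sup>2 + y\<^sup>2"
proof -
  have "2 * (x * y) \<le> x\<^sup>2 + y\<^sup>2"
    using sum_squares_bound[of x y] by (simp add: mult.assoc)
  then show ?thesis
    using zero_le_power2[of x] zero_le_power2[of y] by linarith
qed

lemma sq_norm_add_le: "(norm (x + y))\<^sup>2 \<le> 2 * (norm x)\<^sup>2 + 2 * (norm y)\<^sup>2"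
proof -
  have "(norm (x + y))\<^sup>2 \<le> (norm x + norm y)\<^sup>2"
    by (intro power_mono norm_triangle_ineq) auto
  also have "\<dots> \<le> 2 * (norm x)\<^sup>2 + 2 * (norm y)\<^sup>2"
    using sum_squares_bound[of "norm x" "norm y"] by (simp add: power2_eq_square algebra_simps)
  finally show ?thesis .
qed

lemma summable_on_remove_point:
  fixes f :: "'a \<Rightarrow> 'b::{uniform_topological_group_add, topological_comm_monoid_add, ab_group_add,
                            complete_uniform_space}"
  assumes "f summable_on A - {x}"
  shows "f summable_on A"
proof -
  have "f summable_on insert x (A - {x})"
    using assms by (simp only: summable_on_insert_iff)
  then show ?thesis
    by (rule summable_on_subset) blast
qed

lemma summable_on_times_nonneg:
  fixes f :: "'a \<Rightarrow> real" and g :: "'b \<Rightarrow> real"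
  assumes "f summable_on A" "g summable_on B"
    and "\<And>x. x \<in> A \<Longrightarrow> 0 \<le> f x" "\<And>y. y \<in> B \<Longrightarrow> 0 \<le> g y"
  shows "(\<lambda>(x, y). f x * g y) summable_on A \<times> B"
proof (rule summable_on_SigmaI[where g = "\<lambda>x. f x * infsum g B"])
  show "((\<lambda>y. case (x, y) of (x, y) \<Rightarrow> f x * g y) has_sum f x * infsum g B) B" for x
    using has_sum_cmult_right[OF has_sum_infsum[OF assms(2)], of "f x"] by simp
  show "(\<lambda>x. f x * infsum g B) summable_on A"
    using summable_on_cmult_left[OF assms(1)] by simp
qed (use assms in auto)

lemma has_sum_sum:
  fixes f :: "'i \<Rightarrow> 'a \<Rightarrow> 'b::topological_comm_monoid_add"
  assumes "finite I" "\<And>i. i \<in> I \<Longrightarrow> (f i has_sum s i) A"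
  shows "((\<lambda>x. \<Sum>i\<in>I. f i x) has_sum (\<Sum>i\<in>I. s i)) A"
  using assms by (induction I rule: finite_induct) (auto intro: has_sum_add)

lemma summable_on_sum:
  fixes f :: "'i \<Rightarrow> 'a \<Rightarrow> 'b::{topological_comm_monoid_add, t2_space}"
  assumes "finite I" "\<And>i. i \<in> I \<Longrightarrow> f i summable_on A"
  shows "(\<lambda>x. \<Sum>i\<in>I. f i x) summable_on A"
    and "(\<Sum>\<^sub>\<infinity>x\<in>A. \<Sum>i\<in>I. f i x) = (\<Sum>i\<in>I. infsum (f i) A)"
proof -
  have "((\<lambda>x. \<Sum>i\<in>I. f i x) has_sum (\<Sum>i\<in>I. infsum (f i) A)) A"
    using assms by (intro has_sum_sum) auto
  then show "(\<lambda>x. \<Sum>i\<in>I. f i x) summable_on A" "(\<Sum>\<^sub>\<infinity>x\<in>A. \<Sum>i\<in>I. f i x) = (\<Sum>i\<in>I. infsum (f i) A)"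
    by (auto simp: summable_on_def infsumI)
qed

lemma infsum_diff:
  fixes f g :: "'a \<Rightarrow> 'b::{topological_ab_group_add, t2_space}"
  assumes "f summable_on A" "g summable_on A"
  shows "(\<Sum>\<^sub>\<infinity>x\<in>A. f x - g x) = infsum f A - infsum g A"
  using infsum_add[OF assms(1) summable_on_uminus[THEN iffD2, OF assms(2)]]
  by (simp add: infsum_uminus)

lemma infsum_add_eq_0_if_involution:
  fixes f g :: "'a \<Rightarrow> 'b::{topological_ab_group_add, t2_space}"
  assumes "f summable_on A" "g summable_on A"
    and "\<And>x. x \<in> A \<Longrightarrow> \<sigma> x \<in> A" "\<And>x. x \<in> A \<Longrightarrow> \<sigma> (\<sigma> x) = x"
    and cancel: "\<And>x. x \<in> A \<Longrightarrow> f x + g (\<sigma> x) = 0"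
  shows "infsum f A + infsum g A = 0"
proof -
  have "infsum g A = (\<Sum>\<^sub>\<infinity>x\<in>A. g (\<sigma> x))"
    by (rule infsum_reindex_bij_witness[of A \<sigma> \<sigma> A "\<lambda>x. g (\<sigma> x)" g]) (use assms in auto)
  moreover have "(\<lambda>x. g (\<sigma> x)) summable_on A"
    using assms(2) summable_on_reindex_bij_witness[of A \<sigma> \<sigma> A "\<lambda>x. g (\<sigma> x)" g] assms(3,4) by auto
  ultimately have "infsum f A + infsum g A = (\<Sum>\<^sub>\<infinity>x\<in>A. f x + g (\<sigma> x))"
    using infsum_add[OF assms(1)] by simp
  also have "\<dots> = 0"
    using cancel by (simp add: infsum_0)
  finally show ?thesis .
qed

lemma Cauchy_Schwarz_infsum:
  fixes f g :: "'a \<Rightarrow> real"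
  assumes f: "(\<lambda>x. (f x)\<^sup>2) summable_on A" and g: "(\<lambda>x. (g x)\<^sup>2) summable_on A"
  shows "(\<lambda>x. f x * g x) summable_on A"
    and "(\<Sum>\<^sub>\<infinity>x\<in>A. f x * g x) \<le> sqrt (\<Sum>\<^sub>\<infinity>x\<in>A. (f x)\<^sup>2) * sqrt (\<Sum>\<^sub>\<infinity>x\<in>A. (g x)\<^sup>2)"
proof -
  have "(\<lambda>x. norm (f x * g x)) summable_on A"
  proof (rule summable_on_comparison_test)
    show "(\<lambda>x. (f x)\<^sup>2 + (g x)\<^sup>2) summable_on A"
      using f g by (rule summable_on_add)
    show "norm (f x * g x) \<le> (f x)\<^sup>2 + (g x)\<^sup>2" for x
      using mult_le_sum_squares[of "\<bar>f x\<bar>" "\<bar>g x\<bar>"] by (simp add: abs_mult)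
  qed simp
  then show summable: "(\<lambda>x. f x * g x) summable_on A"
    by (rule abs_summable_summable)
  show "(\<Sum>\<^sub>\<infinity>x\<in>A. f x * g x) \<le> sqrt (\<Sum>\<^sub>\<infinity>x\<in>A. (f x)\<^sup>2) * sqrt (\<Sum>\<^sub>\<infinity>x\<in>A. (g x)\<^sup>2)"
  proof (rule infsum_le_finite_sums[OF summable])
    fix F assume F: "finite F" "F \<subseteq> A"
    have "(\<Sum>x\<in>F. (f x)\<^sup>2) \<le> (\<Sum>\<^sub>\<infinity>x\<in>A. (f x)\<^sup>2)" "(\<Sum>x\<in>F. (g x)\<^sup>2) \<le> (\<Sum>\<^sub>\<infinity>x\<in>A. (g x)\<^sup>2)"
      using F by (intro finite_sum_le_infsum f g; simp)+
    then have sums_le: "L2_set f F * L2_set g F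
        \<le> sqrt (\<Sum>\<^sub>\<infinity>x\<in>A. (f x)\<^sup>2) * sqrt (\<Sum>\<^sub>\<infinity>x\<in>A. (g x)\<^sup>2)"
      unfolding L2_set_def by (intro mult_mono real_sqrt_le_mono) (simp_all add: sum_nonneg infsum_nonneg)
    have "(\<Sum>x\<in>F. f x * g x) \<le> (\<Sum>x\<in>F. \<bar>f x\<bar> * \<bar>g x\<bar>)"
      by (intro sum_mono) (simp flip: abs_mult)
    also have "\<dots> \<le> L2_set f F * L2_set g F"
      by (rule L2_set_mult_ineq)
    finally show "(\<Sum>x\<in>F. f x * g x) \<le> sqrt (\<Sum>\<^sub>\<infinity>x\<in>A. (f x)\<^sup>2) * sqrt (\<Sum>\<^sub>\<infinity>x\<in>A. (g x)\<^sup>2)"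
      using sums_le by (rule order_trans)
  qed
qed

lemma Cauchy_Schwarz_infsum_reindex:
  fixes f g :: "'a \<Rightarrow> real"
  assumes f: "(\<lambda>x. (f x)\<^sup>2) summable_on B" and g: "(\<lambda>y. (g y)\<^sup>2) summable_on C"
    and "A \<subseteq> B" "inj_on \<sigma> A" "\<sigma> ` A \<subseteq> C"
  shows "(\<lambda>x. f x * g (\<sigma> x)) summable_on A"
    and "(\<Sum>\<^sub>\<infinity>x\<in>A. f x * g (\<sigma> x)) \<le> sqrt (\<Sum>\<^sub>\<infinity>x\<in>B. (f x)\<^sup>2) * sqrt (\<Sum>\<^sub>\<infinity>y\<in>C. (g y)\<^sup>2)"
proof -
  have fA: "(\<lambda>x. (f x)\<^sup>2) summable_on A"
    using f assms(3) by (rule summable_on_subset)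
  have g_image: "(\<lambda>y. (g y)\<^sup>2) summable_on \<sigma> ` A"
    using g assms(5) by (rule summable_on_subset)
  then have gA: "(\<lambda>x. (g (\<sigma> x))\<^sup>2) summable_on A"
    using summable_on_reindex[OF assms(4), of "\<lambda>y. (g y)\<^sup>2"] by (simp add: o_def)
  note CS = Cauchy_Schwarz_infsum[OF fA gA]
  show "(\<lambda>x. f x * g (\<sigma> x)) summable_on A"
    by (rule CS(1))
  have "(\<Sum>\<^sub>\<infinity>x\<in>A. (f x)\<^sup>2) \<le> (\<Sum>\<^sub>\<infinity>x\<in>B. (f x)\<^sup>2)"
    using assms(3) by (intro infsum_mono_neutral fA f) auto
  moreover have "(\<Sum>\<^sub>\<infinity>x\<in>A. (g (\<sigma> x))\<^sup>2) = (\<Sum>\<^sub>\<infinity>y\<in>\<sigma> ` A. (g y)\<^sup>2)"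
    using infsum_reindex[OF assms(4), of "\<lambda>y. (g y)\<^sup>2"] by (simp add: o_def)
  moreover have "\<dots> \<le> (\<Sum>\<^sub>\<infinity>y\<in>C. (g y)\<^sup>2)"
    using assms(5) by (intro infsum_mono_neutral g_image g) auto
  ultimately have "sqrt (\<Sum>\<^sub>\<infinity>x\<in>A. (f x)\<^sup>2) * sqrt (\<Sum>\<^sub>\<infinity>x\<in>A. (g (\<sigma> x))\<^sup>2)
      \<le> sqrt (\<Sum>\<^sub>\<infinity>x\<in>B. (f x)\<^sup>2) * sqrt (\<Sum>\<^sub>\<infinity>y\<in>C. (g y)\<^sup>2)"
    by (intro mult_mono real_sqrt_le_mono) (simp_all add: infsum_nonneg)
  with CS(2) show "(\<Sum>\<^sub>\<infinity>x\<in>A. f x * g (\<sigma> x)) \<le> sqrt (\<Sum>\<^sub>\<infinity>x\<in>B. (f x)\<^sup>2) * sqrt (\<Sum>\<^sub>\<infinity>y\<in>C. (g y)\<^sup>2)"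
    by (rule order_trans)
qed

lemma tendsto_0_if_bounded_within:
  fixes f g :: "'a::topological_space \<Rightarrow> real"
  assumes "(g \<longlongrightarrow> 0) (at t within S)" "\<And>s. s \<in> S \<Longrightarrow> f s \<le> g s" "\<And>s. 0 \<le> f s"
  shows "(f \<longlongrightarrow> 0) (at t within S)"
proof (rule Lim_null_comparison[OF _ assms(1)])
  show "\<forall>\<^sub>F s in at t within S. norm (f s) \<le> g s"
    using assms(2,3) unfolding eventually_at_filter by (auto intro!: always_eventually)
qed

lemma has_vector_derivative_if_difference_quotient:
  fixes f :: "real \<Rightarrow> 'a::real_normed_vector"
  assumes "((\<lambda>s. (f s - f t) /\<^sub>R (s - t)) \<longlongrightarrow> D) (at t within S)"
  shows "(f has_vector_derivative D) (at t within S)"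
  unfolding has_vector_derivative_def has_derivative_iff_norm
proof (intro conjI bounded_linear_scaleR_left)
  have "norm ((f s - f t) /\<^sub>R (s - t) - D) = norm (f s - f t - (s - t) *\<^sub>R D) / norm (s - t)"
    if "s \<noteq> t" for s
  proof -
    have "(f s - f t) /\<^sub>R (s - t) - D = inverse (s - t) *\<^sub>R (f s - f t - (s - t) *\<^sub>R D)"
      using that by (simp add: scaleR_diff_right)
    then show ?thesis
      by (simp add: divide_inverse mult.commute)
  qed
  then have "\<forall>\<^sub>F s in at t within S.
      norm ((f s - f t) /\<^sub>R (s - t) - D) = norm (f s - f t - (s - t) *\<^sub>R D) / norm (s - t)"
    by (auto simp: eventually_at_filter intro!: always_eventually)
  with tendsto_norm_zero[OF LIM_zero[OF assms]]
  show "((\<lambda>s. norm (f s - f t - (s - t) *\<^sub>R D) / norm (s - t)) \<longlongrightarrow> 0) (at t within S)"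
    by (rule Lim_transform_eventually)
qed

section \<open>The logarithmic lattice\<close>

lemma plastic_number_gt_1:
  fixes x :: real
  assumes "x ^ 3 - x - 1 = 0"
  shows "x > 1"
proof (rule ccontr)
  assume "\<not> x > 1"
  have "x * x\<^sup>2 = x + 1"
    using assms by (simp add: power3_eq_cube power2_eq_square)
  moreover consider "x \<le> -1" | "-1 < x" "x \<le> 0" | "0 < x" "x \<le> 1"
    using \<open>\<not> x > 1\<close> by linarith
  then have "x * x\<^sup>2 < x + 1"
  proof cases
    case 1
    then have "1 \<le> (- x)\<^sup>2"
      by (intro one_le_power) simp
    then have "x * x\<^sup>2 \<le> x * 1"
      using 1 by (intro mult_left_mono_neg) auto
    then show ?thesis by simp
  next
    case 2
    then have "x * x\<^sup>2 \<le> 0"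
      by (simp add: mult_nonpos_nonneg)
    with 2 show ?thesis by simp
  next
    case 3
    then have "x\<^sup>2 \<le> 1"
      by (simp add: power_le_one)
    then have "x * x\<^sup>2 \<le> x * 1"
      using 3 by (intro mult_left_mono) auto
    then show ?thesis by simp
  qed
  ultimately show False
    by simp
qed

lemma admissible_lambda_gt_1: "admissible_lambda lam \<Longrightarrow> lam > 1"
  unfolding admissible_lambda_def using plastic_number_gt_1 by auto

lemma Lam_uminus: "x \<in> Lam lam \<Longrightarrow> - x \<in> Lam lam"
  unfolding Lam_def by auto

lemma Lam3_uminus: "k \<in> Lam3 lam \<Longrightarrow> - k \<in> Lam3 lam"
  unfolding Lam3_def using Lam_uminus by auto

lemma Lam_abs_ge_1: "lam \<ge> 1 \<Longrightarrow> x \<in> Lam lam \<Longrightarrow> x \<noteq> 0 \<Longrightarrow> 1 \<le> \<bar>x\<bar>"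
  unfolding Lam_def by auto

lemma Lam3_norm_ge_1:
  assumes "lam \<ge> 1" "k \<in> Lam3 lam" "k \<noteq> 0"
  shows "1 \<le> norm k"
proof -
  obtain i where "k $ i \<noteq> 0"
    using assms(3) by (metis vec_eq_iff zero_index)
  then have "1 \<le> \<bar>k $ i\<bar>"
    using assms Lam_abs_ge_1 unfolding Lam3_def by auto
  then show ?thesis
    using component_le_norm_cart[of k i] by linarith
qed

text \<open>The exponent \<open>-2/3\<close> makes the sum over \<open>\<Lambda>\<close> geometric, while the product of the
  weights of the three coordinates of \<open>k\<close> still dominates \<open>1 / |k|\<^sup>2\<close>.\<close>
definition lattice_weight :: "real \<Rightarrow> real" where
  "lattice_weight x = (if x = 0 then 1 else \<bar>x\<bar> powr (-2/3))"

lemma lattice_weight_nonneg: "0 \<le> lattice_weight x"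
  unfolding lattice_weight_def by auto

lemma lattice_weight_summable:
  assumes "lam > 1"
  shows "lattice_weight summable_on Lam lam"
proof -
  define r where "r = lam powr (-2/3)"
  have "0 \<le> r" "r < 1"
    unfolding r_def using assms by (auto intro: powr_less_one)
  then have geometric: "(\<lambda>n. r ^ n) summable_on UNIV"
    by (subst summable_on_UNIV_nonneg_real_iff) (auto intro: summable_geometric)
  have weight_power: "lattice_weight (lam ^ n) = r ^ n" "lattice_weight (- (lam ^ n)) = r ^ n" for n
  proof -
    have "\<bar>lam ^ n\<bar> powr (-2/3) = r ^ n"
      using assms unfolding r_def by (simp add: powr_power powr_realpow[symmetric] powr_powr mult.commute)
    then show "lattice_weight (lam ^ n) = r ^ n" "lattice_weight (- (lam ^ n)) = r ^ n"
      using assms unfolding lattice_weight_def by auto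
  qed
  have inj_pos: "inj (\<lambda>n::nat. lam ^ n)"
    using assms by (intro strict_mono_imp_inj_on) (auto intro: strict_monoI power_strict_increasing)
  then have inj_neg: "inj (\<lambda>n::nat. - (lam ^ n))"
    by (auto simp: inj_def)
  have "lattice_weight summable_on range (\<lambda>n. lam ^ n)"
    by (subst summable_on_reindex[OF inj_pos]) (simp add: o_def weight_power geometric)
  moreover have "lattice_weight summable_on range (\<lambda>n. - (lam ^ n))"
    by (subst summable_on_reindex[OF inj_neg]) (simp add: o_def weight_power geometric)
  moreover have "Lam lam = insert 0 (range (\<lambda>n. lam ^ n) \<union> range (\<lambda>n. - (lam ^ n)))"
    unfolding Lam_def by auto
  ultimately show ?thesis
    using summable_on_union by (simp add: summable_on_insert_iff)
qed

lemma lattice_weight_product_summable: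
  assumes "lam > 1"
  shows "(\<lambda>k::real^3. lattice_weight (k$1) * lattice_weight (k$2) * lattice_weight (k$3))
           summable_on Lam3 lam"
proof -
  let ?L = "Lam lam"
  let ?vec = "\<lambda>(x, y, z). vector [x, y, z] :: real^3"
  have weight: "lattice_weight summable_on ?L"
    using assms by (rule lattice_weight_summable)
  have "(\<lambda>(x, y, z). lattice_weight x * (lattice_weight y * lattice_weight z))
          summable_on ?L \<times> ?L \<times> ?L"
    using summable_on_times_nonneg[OF weight summable_on_times_nonneg[OF weight weight]]
    by (simp add: case_prod_beta' lattice_weight_nonneg)
  moreover have "inj_on ?vec (?L \<times> ?L \<times> ?L)"
    by (auto simp: inj_on_def vec_eq_iff forall_3)
  moreover have "Lam3 lam = ?vec ` (?L \<times> ?L \<times> ?L)"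
  proof (intro equalityI subsetI)
    fix k assume "k \<in> Lam3 lam"
    then have "(k$1, k$2, k$3) \<in> ?L \<times> ?L \<times> ?L"
      unfolding Lam3_def by auto
    moreover have "k = ?vec (k$1, k$2, k$3)"
      by (simp add: vec_eq_iff forall_3)
    ultimately show "k \<in> ?vec ` (?L \<times> ?L \<times> ?L)"
      by blast
  qed (auto simp: Lam3_def forall_3)
  ultimately show ?thesis
    by (simp add: summable_on_reindex o_def case_prod_beta' mult.assoc)
qed

lemma inverse_square_le_lattice_weight_product:
  assumes "lam \<ge> 1" "k \<in> Lam3 lam" "k \<noteq> 0"
  shows "1 / (norm k)\<^sup>2 \<le> lattice_weight (k$1) * lattice_weight (k$2) * lattice_weight (k$3)"
proof -
  define M where "M = max \<bar>k$1\<bar> (max \<bar>k$2\<bar> \<bar>k$3\<bar>)"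
  have le_M: "\<bar>k$i\<bar> \<le> M" for i
    unfolding M_def using exhaust_3[of i] by auto
  have "M \<le> norm k"
    unfolding M_def using component_le_norm_cart[of k] by auto
  obtain i where "k $ i \<noteq> 0"
    using assms(3) by (metis vec_eq_iff zero_index)
  then have "1 \<le> M"
    using le_M[of i] assms Lam_abs_ge_1 unfolding Lam3_def by force
  have weight_ge: "M powr (-2/3) \<le> lattice_weight (k$i)" for i
  proof (cases "k$i = 0")
    case True
    have "M powr (-2/3) \<le> 1 powr (-2/3)"
      using \<open>1 \<le> M\<close> by (intro powr_mono2') auto
    then show ?thesis
      using True unfolding lattice_weight_def by simp
  next
    case False
    then have "1 \<le> \<bar>k$i\<bar>"
      using assms Lam_abs_ge_1 unfolding Lam3_def by auto
    then have "M powr (-2/3) \<le> \<bar>k$i\<bar> powr (-2/3)"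
      using le_M[of i] by (intro powr_mono2') auto
    then show ?thesis
      using False unfolding lattice_weight_def by simp
  qed
  have "1 / (norm k)\<^sup>2 \<le> 1 / M\<^sup>2"
    using \<open>1 \<le> M\<close> \<open>M \<le> norm k\<close> by (intro divide_left_mono power_mono) (auto intro!: mult_pos_pos)
  also have "1 / M\<^sup>2 = M powr (-2)"
    using \<open>1 \<le> M\<close> by (simp add: powr_minus powr_realpow divide_inverse)
  also have "\<dots> = M powr (-2/3) * M powr (-2/3) * M powr (-2/3)"
    by (simp add: powr_add[symmetric])
  also have "\<dots> \<le> lattice_weight (k$1) * lattice_weight (k$2) * lattice_weight (k$3)"
    using weight_ge by (intro mult_mono) (auto intro: mult_nonneg_nonneg lattice_weight_nonneg)
  finally show ?thesis .
qed

lemma inverse_square_summable_Lam3: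
  assumes "lam > 1"
  shows "(\<lambda>k::real^3. 1 / (norm k)\<^sup>2) summable_on Lam3 lam - {0}"
proof (rule summable_on_comparison_test)
  show "(\<lambda>k::real^3. lattice_weight (k$1) * lattice_weight (k$2) * lattice_weight (k$3))
          summable_on Lam3 lam - {0}"
    using lattice_weight_product_summable[OF assms] by (rule summable_on_subset) auto
qed (use inverse_square_le_lattice_weight_product[of lam] assms in auto)

section \<open>Square-summable fields\<close>

definition sq_summable :: "real \<Rightarrow> (real^3 \<Rightarrow> 'a::real_normed_vector) \<Rightarrow> bool" where
  "sq_summable lam a \<longleftrightarrow> (\<lambda>k. (norm (a k))\<^sup>2) summable_on Lam3 lam"

definition l2_norm_sq :: "real \<Rightarrow> (real^3 \<Rightarrow> 'a::real_normed_vector) \<Rightarrow> real" where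
  "l2_norm_sq lam a = (\<Sum>\<^sub>\<infinity>k\<in>Lam3 lam. (norm (a k))\<^sup>2)"

lemma l2_norm_sq_nonneg: "0 \<le> l2_norm_sq lam a"
  unfolding l2_norm_sq_def by (simp add: infsum_nonneg)

lemma sq_summable_add:
  assumes "sq_summable lam a" "sq_summable lam b"
  shows "sq_summable lam (\<lambda>k. a k + b k)"
  unfolding sq_summable_def
proof (rule summable_on_comparison_test)
  show "(\<lambda>k. 2 * (norm (a k))\<^sup>2 + 2 * (norm (b k))\<^sup>2) summable_on Lam3 lam"
    using assms unfolding sq_summable_def by (intro summable_on_add summable_on_cmult_right)
qed (simp_all add: sq_norm_add_le)

lemma sq_summable_scaleR: "sq_summable lam a \<Longrightarrow> sq_summable lam (\<lambda>k. c *\<^sub>R a k)"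
  unfolding sq_summable_def by (simp add: power_mult_distrib summable_on_cmult_right)

lemma sq_summable_diff:
  assumes "sq_summable lam a" "sq_summable lam b"
  shows "sq_summable lam (\<lambda>k. a k - b k)"
  using sq_summable_add[OF assms(1) sq_summable_scaleR[OF assms(2), of "-1"]] by simp

lemma l2_norm_sq_add_le:
  assumes "sq_summable lam a" "sq_summable lam b"
  shows "l2_norm_sq lam (\<lambda>k. a k + b k) \<le> 2 * l2_norm_sq lam a + 2 * l2_norm_sq lam b"
proof -
  have "l2_norm_sq lam (\<lambda>k. a k + b k)
          \<le> (\<Sum>\<^sub>\<infinity>k\<in>Lam3 lam. 2 * (norm (a k))\<^sup>2 + 2 * (norm (b k))\<^sup>2)"
    unfolding l2_norm_sq_def using assms sq_summable_add[OF assms]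
    unfolding sq_summable_def
    by (intro infsum_mono summable_on_add summable_on_cmult_right sq_norm_add_le)
  also have "\<dots> = 2 * l2_norm_sq lam a + 2 * l2_norm_sq lam b"
    using assms unfolding l2_norm_sq_def sq_summable_def
    by (simp add: infsum_add summable_on_cmult_right infsum_cmult_right')
  finally show ?thesis .
qed

lemma l2_norm_sq_scaleR: "l2_norm_sq lam (\<lambda>k. c *\<^sub>R a k) = c\<^sup>2 * l2_norm_sq lam a"
  unfolding l2_norm_sq_def by (simp add: power_mult_distrib infsum_cmult_right')

lemma hm_finite_add:
  assumes "hm_finite lam m a" "hm_finite lam m b"
  shows "hm_finite lam m (\<lambda>k. a k + b k)"
  unfolding hm_finite_def
proof (rule summable_on_comparison_test)
  show "(\<lambda>k. 2 * hm_summand m a k + 2 * hm_summand m b k) summable_on Lam3 lam - {0}"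
    using assms unfolding hm_finite_def by (intro summable_on_add summable_on_cmult_right)
  show "hm_summand m (\<lambda>k. a k + b k) k \<le> 2 * hm_summand m a k + 2 * hm_summand m b k" for k
    using mult_left_mono[OF sq_norm_add_le[of "a k" "b k"], of "norm k ^ (2 * m)"]
    unfolding hm_summand_def by (simp add: algebra_simps)
qed (simp add: hm_summand_def)

lemma hm_finite_scaleR:
  assumes "hm_finite lam m a"
  shows "hm_finite lam m (\<lambda>k. c *\<^sub>R a k)"
proof -
  have "hm_summand m (\<lambda>k. c *\<^sub>R a k) = (\<lambda>k. c\<^sup>2 * hm_summand m a k)"
    unfolding hm_summand_def by (auto simp: power_mult_distrib)
  then show ?thesis
    using assms unfolding hm_finite_def by (simp add: summable_on_cmult_right)
qed

lemma hm_finite_diff: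
  assumes "hm_finite lam m a" "hm_finite lam m b"
  shows "hm_finite lam m (\<lambda>k. a k - b k)"
  using hm_finite_add[OF assms(1) hm_finite_scaleR[OF assms(2), of "-1"]] by simp

lemma weighted_sq_norm_le_hm_summand:
  assumes "lam \<ge> 1" "k \<in> Lam3 lam" "k \<noteq> 0" "j \<le> m"
  shows "norm k ^ (2 * j) * (norm (a k))\<^sup>2 \<le> hm_summand m a k"
proof -
  have "norm k ^ (2 * j) \<le> norm k ^ (2 * m)"
    using Lam3_norm_ge_1[OF assms(1-3)] assms(4) by (intro power_increasing) auto
  then show ?thesis
    unfolding hm_summand_def by (simp add: mult_right_mono)
qed

lemma hm_finite_weighted_summable:
  assumes "lam \<ge> 1" "hm_finite lam m a" "j \<le> m"
  shows "(\<lambda>k. norm k ^ (2 * j) * (norm (a k))\<^sup>2) summable_on Lam3 lam"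
proof (rule summable_on_remove_point)
  show "(\<lambda>k. norm k ^ (2 * j) * (norm (a k))\<^sup>2) summable_on Lam3 lam - {0}"
  proof (rule summable_on_comparison_test)
    show "hm_summand m a summable_on Lam3 lam - {0}"
      using assms(2) unfolding hm_finite_def .
    show "norm k ^ (2 * j) * (norm (a k))\<^sup>2 \<le> hm_summand m a k" if "k \<in> Lam3 lam - {0}" for k
      using weighted_sq_norm_le_hm_summand[OF assms(1) _ _ assms(3)] that by blast
  qed simp
qed

lemma l2_norm_sq_le_hm_norm:
  assumes "lam \<ge> 1" "hm_finite lam m a" "a 0 = 0"
  shows "l2_norm_sq lam a \<le> (hm_norm lam m a)\<^sup>2"
proof -
  have "l2_norm_sq lam a \<le> (\<Sum>\<^sub>\<infinity>k\<in>Lam3 lam - {0}. hm_summand m a k)"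
    unfolding l2_norm_sq_def
  proof (rule infsum_mono_neutral)
    show "(\<lambda>k. (norm (a k))\<^sup>2) summable_on Lam3 lam"
      using hm_finite_weighted_summable[OF assms(1,2), of 0] by simp
    show "hm_summand m a summable_on Lam3 lam - {0}"
      using assms(2) unfolding hm_finite_def .
    show "(norm (a k))\<^sup>2 \<le> hm_summand m a k" if "k \<in> Lam3 lam \<inter> (Lam3 lam - {0})" for k
      using weighted_sq_norm_le_hm_summand[of lam k 0 m a] assms(1) that by simp
    show "(norm (a k))\<^sup>2 \<le> 0" if "k \<in> Lam3 lam - (Lam3 lam - {0})" for k
      using that assms(3) by auto
    show "0 \<le> hm_summand m a k" for k
      by (simp add: hm_summand_def)
  qed
  also have "\<dots> = (hm_norm lam m a)\<^sup>2"
    unfolding hm_norm_def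
    by (rule real_sqrt_pow2[symmetric], rule infsum_nonneg) (simp add: hm_summand_def)
  finally show ?thesis .
qed

definition l1_h1 :: "real \<Rightarrow> (real^3 \<Rightarrow> complex^3) \<Rightarrow> bool" where
  "l1_h1 lam a \<longleftrightarrow> (\<lambda>k. norm (a k)) summable_on Lam3 lam \<and> sq_summable lam a
     \<and> sq_summable lam (\<lambda>k. norm k *\<^sub>R a k)"

lemma Vm_imp_sq_summable:
  assumes "lam \<ge> 1" "Vm lam m a"
  shows "sq_summable lam a"
proof -
  have "hm_finite lam m a"
    using assms(2) unfolding Vm_def by blast
  from hm_finite_weighted_summable[OF assms(1) this, of 0] show ?thesis
    unfolding sq_summable_def by simp
qed

lemma Vm_imp_l1_h1:
  assumes "lam > 1" "m \<ge> 1" "Vm lam m a"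
  shows "l1_h1 lam a"
proof -
  have hm: "hm_finite lam m a"
    using assms(3) unfolding Vm_def by blast
  have grad: "(\<lambda>k. (norm k * norm (a k))\<^sup>2) summable_on Lam3 lam"
    using hm_finite_weighted_summable[OF _ hm assms(2)] assms(1) by (simp add: power_mult_distrib)
  have bound: "norm (a k) \<le> 1 / (norm k)\<^sup>2 + (norm k * norm (a k))\<^sup>2" if "k \<noteq> 0" for k
  proof -
    have "norm (a k) = (1 / norm k) * (norm k * norm (a k))"
      using that by simp
    also have "\<dots> \<le> (1 / norm k)\<^sup>2 + (norm k * norm (a k))\<^sup>2"
      by (rule mult_le_sum_squares)
    finally show ?thesis
      by (simp add: power_divide)
  qed
  have "(\<lambda>k. norm (a k)) summable_on Lam3 lam - {0}"
  proof (rule summable_on_comparison_test)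
    show "(\<lambda>k. 1 / (norm k)\<^sup>2 + (norm k * norm (a k))\<^sup>2) summable_on Lam3 lam - {0}"
      by (rule summable_on_add[OF inverse_square_summable_Lam3[OF assms(1)]
            summable_on_subset[OF grad Diff_subset]])
  qed (use bound in auto)
  then have "(\<lambda>k. norm (a k)) summable_on Lam3 lam"
    by (rule summable_on_remove_point)
  moreover have "sq_summable lam (\<lambda>k. norm k *\<^sub>R a k)"
    using grad unfolding sq_summable_def by simp
  ultimately show ?thesis
    unfolding l1_h1_def using Vm_imp_sq_summable assms(1,3) by simp
qed

section \<open>The inner product of fields\<close>

definition cinner :: "complex^'n \<Rightarrow> complex^'n \<Rightarrow> complex" where
  "cinner x y = (\<Sum>i\<in>UNIV. x $ i * cnj (y $ i))"

lemma norm_cinner_le: "norm (cinner x y) \<le> norm x * norm y"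
proof -
  have "norm (cinner x y) \<le> (\<Sum>i\<in>UNIV. \<bar>norm (x $ i)\<bar> * \<bar>norm (y $ i)\<bar>)"
    unfolding cinner_def by (rule order_trans[OF norm_sum]) (simp add: norm_mult)
  also have "\<dots> \<le> L2_set (\<lambda>i. norm (x $ i)) UNIV * L2_set (\<lambda>i. norm (y $ i)) UNIV"
    by (rule L2_set_mult_ineq)
  finally show ?thesis
    by (simp add: norm_vec_def)
qed

lemma cnj_cinner: "cnj (cinner x y) = cinner y x"
  unfolding cinner_def by (simp add: mult.commute)

lemma cinner_diff_left: "cinner (x - y) z = cinner x z - cinner y z"
  unfolding cinner_def by (simp add: left_diff_distrib sum_subtractf)

lemma cinner_diff_right: "cinner x (y - z) = cinner x y - cinner x z"
  unfolding cinner_def by (simp add: right_diff_distrib sum_subtractf)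

lemma cinner_uminus_left: "cinner (- x) y = - cinner x y"
  unfolding cinner_def by (simp add: sum_negf)

lemma cinner_uminus_right: "cinner x (- y) = - cinner x y"
  unfolding cinner_def by (simp add: sum_negf)

lemma cinner_scaleR_left: "cinner (r *\<^sub>R x) y = of_real r * cinner x y"
  unfolding cinner_def
  by (simp only: vector_scaleR_component) (simp add: scaleR_conv_of_real sum_distrib_left mult.assoc)

lemma cinner_scaleR_right: "cinner x (r *\<^sub>R y) = of_real r * cinner x y"
  unfolding cinner_def
  by (simp only: vector_scaleR_component) (simp add: scaleR_conv_of_real sum_distrib_left mult.left_commute)

lemma cinner_cnj_vec: "cinner (\<chi> i. cnj (x $ i)) (\<chi> i. cnj (y $ i)) = cinner y x"
  unfolding cinner_def by (simp add: mult.commute)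

lemma inner_field_eq_infsum_cinner:
  "inner_field lam a b = (\<Sum>\<^sub>\<infinity>k\<in>Lam3 lam. cinner (a k) (b k))"
  unfolding inner_field_def cinner_def ..

lemma cnj_inner_field: "cnj (inner_field lam a b) = inner_field lam b a"
  unfolding inner_field_eq_infsum_cinner
  using infsum_cnj[of "\<lambda>k. cinner (a k) (b k)" "Lam3 lam"] by (simp add: cnj_cinner)

lemma cinner_abs_summable:
  assumes "sq_summable lam a" "sq_summable lam b"
  shows "(\<lambda>k. norm (cinner (a k) (b k))) summable_on Lam3 lam"
proof (rule summable_on_comparison_test)
  show "(\<lambda>k. norm (a k) * norm (b k)) summable_on Lam3 lam"
    using assms unfolding sq_summable_def by (rule Cauchy_Schwarz_infsum(1))
  show "norm (cinner (a k) (b k)) \<le> norm (a k) * norm (b k)" for k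
    by (rule norm_cinner_le)
qed simp

lemma cinner_summable:
  assumes "sq_summable lam a" "sq_summable lam b"
  shows "(\<lambda>k. cinner (a k) (b k)) summable_on Lam3 lam"
  using cinner_abs_summable[OF assms] by (rule abs_summable_summable)

lemma norm_inner_field_le:
  assumes "sq_summable lam a" "sq_summable lam b"
  shows "norm (inner_field lam a b) \<le> sqrt (l2_norm_sq lam a) * sqrt (l2_norm_sq lam b)"
proof -
  note CS = Cauchy_Schwarz_infsum[of "\<lambda>k. norm (a k)" "Lam3 lam" "\<lambda>k. norm (b k)"]
  have "norm (inner_field lam a b) \<le> (\<Sum>\<^sub>\<infinity>k\<in>Lam3 lam. norm (cinner (a k) (b k)))"
    unfolding inner_field_eq_infsum_cinner
    by (rule norm_infsum_bound[OF cinner_abs_summable[OF assms]])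
  also have "\<dots> \<le> (\<Sum>\<^sub>\<infinity>k\<in>Lam3 lam. norm (a k) * norm (b k))"
  proof (rule infsum_mono[OF cinner_abs_summable[OF assms]])
    show "(\<lambda>k. norm (a k) * norm (b k)) summable_on Lam3 lam"
      using assms CS(1) unfolding sq_summable_def by blast
  qed (rule norm_cinner_le)
  also have "\<dots> \<le> sqrt (l2_norm_sq lam a) * sqrt (l2_norm_sq lam b)"
    using assms CS(2) unfolding sq_summable_def l2_norm_sq_def by blast
  finally show ?thesis .
qed

lemma inner_field_diff_left:
  assumes "sq_summable lam a" "sq_summable lam b" "sq_summable lam c"
  shows "inner_field lam (\<lambda>k. a k - b k) c = inner_field lam a c - inner_field lam b c"
  unfolding inner_field_eq_infsum_cinner cinner_diff_left
  using assms by (intro infsum_diff cinner_summable)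

lemma inner_field_diff_right:
  assumes "sq_summable lam a" "sq_summable lam b" "sq_summable lam c"
  shows "inner_field lam a (\<lambda>k. b k - c k) = inner_field lam a b - inner_field lam a c"
  unfolding inner_field_eq_infsum_cinner cinner_diff_right
  using assms by (intro infsum_diff cinner_summable)

lemma inner_field_scaleR_left: "inner_field lam (\<lambda>k. r *\<^sub>R a k) c = of_real r * inner_field lam a c"
  unfolding inner_field_eq_infsum_cinner cinner_scaleR_left by (rule infsum_cmult_right')

lemma inner_field_scaleR_right: "inner_field lam a (\<lambda>k. r *\<^sub>R c k) = of_real r * inner_field lam a c"
  unfolding inner_field_eq_infsum_cinner cinner_scaleR_right by (rule infsum_cmult_right')

lemma tendsto_inner_field:
  assumes summable: "\<forall>\<^sub>F s in F. sq_summable lam (a s) \<and> sq_summable lam (b s)"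
    and "sq_summable lam a0" "sq_summable lam b0"
    and a: "((\<lambda>s. l2_norm_sq lam (\<lambda>k. a s k - a0 k)) \<longlongrightarrow> 0) F"
    and b: "((\<lambda>s. l2_norm_sq lam (\<lambda>k. b s k - b0 k)) \<longlongrightarrow> 0) F"
  shows "((\<lambda>s. inner_field lam (a s) (b s)) \<longlongrightarrow> inner_field lam a0 b0) F"
proof -
  define da where "da s = (\<lambda>k. a s k - a0 k)" for s
  define db where "db s = (\<lambda>k. b s k - b0 k)" for s
  define bound where "bound s = sqrt (l2_norm_sq lam (da s)) * sqrt (l2_norm_sq lam (db s))
      + sqrt (l2_norm_sq lam (da s)) * sqrt (l2_norm_sq lam b0)
      + sqrt (l2_norm_sq lam a0) * sqrt (l2_norm_sq lam (db s))" for s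
  have "(bound \<longlongrightarrow> sqrt 0 * sqrt 0 + sqrt 0 * sqrt (l2_norm_sq lam b0) + sqrt (l2_norm_sq lam a0) * sqrt 0) F"
    unfolding bound_def da_def db_def by (intro tendsto_intros a b)
  then have "(bound \<longlongrightarrow> 0) F"
    by simp
  moreover have "\<forall>\<^sub>F s in F. norm (inner_field lam (a s) (b s) - inner_field lam a0 b0) \<le> bound s"
    using summable
  proof eventually_elim
    case (elim s)
    then have da: "sq_summable lam (da s)" and db: "sq_summable lam (db s)"
      unfolding da_def db_def using assms(2,3) by (auto intro: sq_summable_diff)
    have "inner_field lam (a s) (b s) - inner_field lam a0 b0
        = inner_field lam (da s) (db s) + inner_field lam (da s) b0 + inner_field lam a0 (db s)"
      using elim assms(2,3) da unfolding da_def db_def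
      by (simp add: inner_field_diff_left inner_field_diff_right sq_summable_diff)
    also have "norm \<dots> \<le> bound s"
      unfolding bound_def using da db assms(2,3)
      by (intro norm_triangle_le add_mono norm_inner_field_le)
    finally show ?case .
  qed
  ultimately have "((\<lambda>s. inner_field lam (a s) (b s) - inner_field lam a0 b0) \<longlongrightarrow> 0) F"
    by (rule Lim_null_comparison[rotated])
  then show ?thesis
    by (rule LIM_zero_cancel)
qed

section \<open>Triad sums of the nonlinear terms\<close>

definition of_real_vec :: "real^'n \<Rightarrow> complex^'n" where
  "of_real_vec q = (\<chi> i. complex_of_real (q $ i))"

lemma norm_of_real_vec [simp]: "norm (of_real_vec q) = norm q"
  unfolding of_real_vec_def norm_vec_def by simp

lemma of_real_vec_diff: "of_real_vec (x - y) = of_real_vec x - of_real_vec y"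
  unfolding of_real_vec_def by (simp add: vec_eq_iff)

lemma of_real_vec_uminus: "of_real_vec (- x) = - of_real_vec x"
  unfolding of_real_vec_def by (simp add: vec_eq_iff)

lemma cinner_cnj_vec_of_real_vec:
  "cinner (\<chi> i. cnj (x $ i)) (of_real_vec q) = cnj (cinner x (of_real_vec q))"
  unfolding cinner_def of_real_vec_def by simp

lemma divergence_eq_cinner: "divergence a k = \<i> * cinner (a k) (of_real_vec k)"
  unfolding divergence_def cinner_def of_real_vec_def by (simp add: mult.commute)

lemma cinner_grad_eq_0:
  assumes "divergence h k = 0"
  shows "cinner (grad p k) (h k) = 0"
proof -
  have "cinner (grad p k) (h k) = \<i> * p k * cnj (cinner (h k) (of_real_vec k))"
    unfolding cinner_def grad_def of_real_vec_def by (simp add: sum_distrib_left mult_ac)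
  then show ?thesis
    using assms by (simp add: divergence_eq_cinner)
qed

definition triads :: "real \<Rightarrow> ((real^3) \<times> (real^3)) set" where
  "triads lam = (SIGMA k:Lam3 lam. {p \<in> Lam3 lam. k - p \<in> Lam3 lam})"

lemma mem_triads: "(k, p) \<in> triads lam \<longleftrightarrow> k \<in> Lam3 lam \<and> p \<in> Lam3 lam \<and> k - p \<in> Lam3 lam"
  unfolding triads_def by auto

text \<open>The contribution \<open>a(p)\<cdot>(i q) b(q) \<cdot> conj c(k)\<close> of the triad \<open>k = p + q\<close> to
  \<open>(a * \<nabla>b, c)\<close>.\<close>
definition triad_term :: "(real^3 \<Rightarrow> complex^3) \<Rightarrow> (real^3 \<Rightarrow> complex^3) \<Rightarrow> (real^3 \<Rightarrow> complex^3)
                            \<Rightarrow> (real^3) \<times> (real^3) \<Rightarrow> complex" where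
  "triad_term a b c = (\<lambda>(k, p). \<i> * cinner (a p) (of_real_vec (k - p)) * cinner (b (k - p)) (c k))"

lemma triad_term_eq_double_sum:
  "triad_term a b c (k, p)
     = (\<Sum>i\<in>UNIV. \<Sum>j\<in>UNIV. a p $ j * (\<i> * of_real ((k - p) $ j) * b (k - p) $ i) * cnj (c k $ i))"
proof -
  define A where "A = (\<Sum>j\<in>UNIV. a p $ j * of_real ((k - p) $ j))"
  have "triad_term a b c (k, p) = \<i> * A * (\<Sum>i\<in>UNIV. b (k - p) $ i * cnj (c k $ i))"
    unfolding triad_term_def cinner_def of_real_vec_def A_def by simp
  also have "\<dots> = (\<Sum>i\<in>UNIV. A * (\<i> * b (k - p) $ i * cnj (c k $ i)))"
    by (simp add: sum_distrib_left mult_ac)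
  also have "\<dots> = (\<Sum>i\<in>UNIV. \<Sum>j\<in>UNIV. a p $ j * (\<i> * of_real ((k - p) $ j) * b (k - p) $ i) * cnj (c k $ i))"
    unfolding A_def by (simp add: sum_distrib_left sum_distrib_right mult_ac)
  finally show ?thesis .
qed

lemma norm_triad_term_le:
  "norm (triad_term a b c (k, p)) \<le> norm (a p) * (norm (k - p) * norm (b (k - p))) * norm (c k)"
proof -
  have "norm (triad_term a b c (k, p))
      = norm (cinner (a p) (of_real_vec (k - p))) * norm (cinner (b (k - p)) (c k))"
    unfolding triad_term_def by (simp add: norm_mult)
  also have "\<dots> \<le> (norm (a p) * norm (k - p)) * (norm (b (k - p)) * norm (c k))"
    using norm_cinner_le[of "a p" "of_real_vec (k - p)"] norm_cinner_le[of "b (k - p)" "c k"]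
    by (auto intro!: mult_mono)
  finally show ?thesis
    by (simp add: mult_ac)
qed

lemma triads_summable_nonneg:
  fixes a b c :: "real^3 \<Rightarrow> real"
  assumes nonneg: "\<And>k. 0 \<le> a k" "\<And>k. 0 \<le> b k" "\<And>k. 0 \<le> c k"
    and a: "a summable_on Lam3 lam"
    and b: "(\<lambda>k. (b k)\<^sup>2) summable_on Lam3 lam" and c: "(\<lambda>k. (c k)\<^sup>2) summable_on Lam3 lam"
  shows "(\<lambda>(k, p). a p * b (k - p) * c k) summable_on triads lam"
proof -
  define K where "K p = {k \<in> Lam3 lam. k - p \<in> Lam3 lam}" for p
  define M where "M = sqrt (\<Sum>\<^sub>\<infinity>k\<in>Lam3 lam. (c k)\<^sup>2) * sqrt (\<Sum>\<^sub>\<infinity>k\<in>Lam3 lam. (b k)\<^sup>2)"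
  have inj: "inj_on (\<lambda>k. k - p) (K p)" for p
    by (auto simp: inj_on_def)
  have shift: "(\<lambda>k. c k * b (k - p)) summable_on K p" "(\<Sum>\<^sub>\<infinity>k\<in>K p. c k * b (k - p)) \<le> M" for p
    unfolding M_def using Cauchy_Schwarz_infsum_reindex[OF c b _ inj] by (auto simp: K_def)
  define g where "g p = a p * (\<Sum>\<^sub>\<infinity>k\<in>K p. c k * b (k - p))" for p
  have swapped: "(\<lambda>(p, k). a p * (c k * b (k - p))) summable_on (SIGMA p:Lam3 lam. K p)"
  proof (rule summable_on_SigmaI[where g = g])
    show "((\<lambda>k. case (p, k) of (p, k) \<Rightarrow> a p * (c k * b (k - p))) has_sum g p) (K p)" for p
      unfolding g_def using has_sum_cmult_right[OF has_sum_infsum[OF shift(1)], of "a p"] by simp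
    show "g summable_on Lam3 lam"
    proof (rule summable_on_comparison_test)
      show "(\<lambda>p. a p * M) summable_on Lam3 lam"
        using a by (rule summable_on_cmult_left)
      show "g p \<le> a p * M" for p
        unfolding g_def using shift(2) nonneg(1) by (rule mult_left_mono)
      show "0 \<le> g p" for p
        unfolding g_def using nonneg by (auto intro!: mult_nonneg_nonneg infsum_nonneg)
    qed
  qed (use nonneg in auto)
  have inj_swap: "inj_on (\<lambda>(p, k). (k, p)) (SIGMA p:Lam3 lam. K p)"
    by (auto simp: inj_on_def)
  have "(\<lambda>(k, p). a p * b (k - p) * c k) summable_on (\<lambda>(p, k). (k, p)) ` (SIGMA p:Lam3 lam. K p)"
    unfolding summable_on_reindex[OF inj_swap]
    by (rule summable_on_cong[THEN iffD1, OF _ swapped]) (auto simp: mult_ac)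
  moreover have "(\<lambda>(p, k). (k, p)) ` (SIGMA p:Lam3 lam. K p) = triads lam"
    unfolding triads_def K_def by force
  ultimately show ?thesis
    by simp
qed

lemma triad_term_summable:
  assumes "l1_h1 lam a" "l1_h1 lam b" "l1_h1 lam c"
  shows "triad_term a b c summable_on triads lam"
proof -
  have "(\<lambda>(k, p). norm (a p) * (norm (k - p) * norm (b (k - p))) * norm (c k)) summable_on triads lam"
    using assms unfolding l1_h1_def sq_summable_def
    by (intro triads_summable_nonneg[where b = "\<lambda>q. norm q * norm (b q)"]) (auto simp: power_mult_distrib)
  then have "(\<lambda>x. norm (triad_term a b c x)) summable_on triads lam"
    by (rule summable_on_comparison_test) (auto simp: norm_triad_term_le)
  then show ?thesis
    by (rule abs_summable_summable)
qed

lemma cinner_adv_eq_infsum_triad_term: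
  assumes "sq_summable lam a" "sq_summable lam (\<lambda>q. norm q *\<^sub>R b q)"
  shows "cinner (adv lam a b k) (c k)
           = (\<Sum>\<^sub>\<infinity>p\<in>{p \<in> Lam3 lam. k - p \<in> Lam3 lam}. triad_term a b c (k, p))"
proof -
  let ?P = "{p \<in> Lam3 lam. k - p \<in> Lam3 lam}"
  define g where "g i j p = a p $ j * (\<i> * of_real ((k - p) $ j) * b (k - p) $ i)" for i j p
  have a: "(\<lambda>p. (norm (a p))\<^sup>2) summable_on Lam3 lam"
    using assms(1) unfolding sq_summable_def .
  have b: "(\<lambda>q. (norm q * norm (b q))\<^sup>2) summable_on Lam3 lam"
    using assms(2) unfolding sq_summable_def by simp
  have dominant: "(\<lambda>p. norm (a p) * (norm (k - p) * norm (b (k - p)))) summable_on ?P"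
    by (rule Cauchy_Schwarz_infsum_reindex(1)[OF a b, where \<sigma> = "\<lambda>p. k - p"]) (auto simp: inj_on_def)
  have summable: "g i j summable_on ?P" for i j
  proof -
    have "norm (g i j p) \<le> norm (a p) * (norm (k - p) * norm (b (k - p)))" for p
    proof -
      have "norm (g i j p) = norm (a p $ j) * (\<bar>(k - p) $ j\<bar> * norm (b (k - p) $ i))"
        unfolding g_def norm_mult norm_of_real by simp
      also have "\<dots> \<le> norm (a p) * (norm (k - p) * norm (b (k - p)))"
        by (intro mult_mono Finite_Cartesian_Product.norm_nth_le component_le_norm_cart) auto
      finally show ?thesis .
    qed
    then have "(\<lambda>p. norm (g i j p)) summable_on ?P"
      by (intro summable_on_comparison_test[OF dominant]) auto
    then show ?thesis
      by (rule abs_summable_summable)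
  qed
  have "cinner (adv lam a b k) (c k) = (\<Sum>i\<in>UNIV. \<Sum>j\<in>UNIV. \<Sum>\<^sub>\<infinity>p\<in>?P. g i j p * cnj (c k $ i))"
    unfolding cinner_def adv_def conv_def g_def by (simp add: sum_distrib_right infsum_cmult_left')
  also have "\<dots> = (\<Sum>\<^sub>\<infinity>p\<in>?P. \<Sum>i\<in>UNIV. \<Sum>j\<in>UNIV. g i j p * cnj (c k $ i))"
    using summable by (simp add: summable_on_sum summable_on_cmult_left)
  also have "\<dots> = (\<Sum>\<^sub>\<infinity>p\<in>?P. triad_term a b c (k, p))"
    unfolding g_def triad_term_eq_double_sum ..
  finally show ?thesis .
qed

lemma inner_field_adv:
  assumes "l1_h1 lam a" "l1_h1 lam b" "l1_h1 lam c"
  shows "(\<lambda>k. cinner (adv lam a b k) (c k)) summable_on Lam3 lam"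
    and "inner_field lam (adv lam a b) c = (\<Sum>\<^sub>\<infinity>x\<in>triads lam. triad_term a b c x)"
proof -
  have summable: "triad_term a b c summable_on (SIGMA k:Lam3 lam. {p \<in> Lam3 lam. k - p \<in> Lam3 lam})"
    using triad_term_summable[OF assms] unfolding triads_def .
  have slice: "cinner (adv lam a b k) (c k)
                 = (\<Sum>\<^sub>\<infinity>p\<in>{p \<in> Lam3 lam. k - p \<in> Lam3 lam}. triad_term a b c (k, p))" for k
    using assms(1,2) unfolding l1_h1_def by (intro cinner_adv_eq_infsum_triad_term) auto
  have "(\<lambda>p. triad_term a b c (k, p)) summable_on {p \<in> Lam3 lam. k - p \<in> Lam3 lam}"
    if "k \<in> Lam3 lam" for k
    using summable_on_SigmaD1[of "\<lambda>k p. triad_term a b c (k, p)"] summable that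
    by (simp add: case_prod_eta)
  then have "(\<lambda>k. \<Sum>\<^sub>\<infinity>p\<in>{p \<in> Lam3 lam. k - p \<in> Lam3 lam}. triad_term a b c (k, p)) summable_on Lam3 lam"
    by (rule summable_on_SigmaD[OF summable])
  then show "(\<lambda>k. cinner (adv lam a b k) (c k)) summable_on Lam3 lam"
    unfolding slice .
  show "inner_field lam (adv lam a b) c = (\<Sum>\<^sub>\<infinity>x\<in>triads lam. triad_term a b c x)"
    unfolding inner_field_eq_infsum_cinner slice triads_def
    by (rule infsum_Sigma_banach[OF summable])
qed

lemma triad_term_antisym:
  assumes "reality_vec lam a" "p \<in> Lam3 lam" "divergence a p = 0"
  shows "triad_term a b c (k, p) + cnj (triad_term a c b (k - p, - p)) = 0"
proof -
  have "a (- p) = (\<chi> i. cnj (a p $ i))"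
    using assms(1,2) unfolding reality_vec_def by blast
  then have "cnj (cinner (a (- p)) (of_real_vec k)) = cinner (a p) (of_real_vec k)"
    by (simp add: cinner_cnj_vec_of_real_vec)
  moreover have "cinner (a p) (of_real_vec p) = 0"
    using assms(3) by (simp add: divergence_eq_cinner)
  moreover have "triad_term a c b (k - p, - p) = \<i> * cinner (a (- p)) (of_real_vec k) * cinner (c k) (b (k - p))"
    unfolding triad_term_def by simp
  moreover have "triad_term a b c (k, p)
      = \<i> * (cinner (a p) (of_real_vec k) - cinner (a p) (of_real_vec p)) * cinner (b (k - p)) (c k)"
    unfolding triad_term_def by (simp add: of_real_vec_diff cinner_diff_right)
  ultimately show ?thesis
    using cnj_cinner[of "c k" "b (k - p)"] by (simp add: algebra_simps)
qed

lemma triad_term_self_cancel: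
  assumes "reality_vec lam c" "k \<in> Lam3 lam" "k - p \<in> Lam3 lam" "divergence a p = 0"
  shows "triad_term a c c (k, p) + triad_term a c c (p - k, p) = 0"
proof -
  have "c (- k) = (\<chi> i. cnj (c k $ i))" "c (p - k) = (\<chi> i. cnj (c (k - p) $ i))"
    using assms(1-3) unfolding reality_vec_def by (metis minus_diff_eq)+
  then have "cinner (c (- k)) (c (p - k)) = cinner (c (k - p)) (c k)"
    by (simp add: cinner_cnj_vec)
  moreover have "cinner (a p) (of_real_vec p) = 0"
    using assms(4) by (simp add: divergence_eq_cinner)
  ultimately show ?thesis
    unfolding triad_term_def
    by (simp add: of_real_vec_diff of_real_vec_uminus cinner_diff_right cinner_uminus_right
        algebra_simps)
qed

lemma inner_field_adv_antisym:
  assumes "l1_h1 lam a" "l1_h1 lam b" "l1_h1 lam c"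
    and "reality_vec lam a" "\<forall>p\<in>Lam3 lam. divergence a p = 0"
  shows "inner_field lam (adv lam a b) c + cnj (inner_field lam (adv lam a c) b) = 0"
proof -
  have "infsum (triad_term a b c) (triads lam) + (\<Sum>\<^sub>\<infinity>x\<in>triads lam. cnj (triad_term a c b x)) = 0"
  proof (rule infsum_add_eq_0_if_involution[where \<sigma> = "\<lambda>(k, p). (k - p, - p)"])
    show "triad_term a b c summable_on triads lam"
      by (rule triad_term_summable[OF assms(1-3)])
    show "(\<lambda>x. cnj (triad_term a c b x)) summable_on triads lam"
      using triad_term_summable[OF assms(1,3,2)] by simp
    show "(case x of (k, p) \<Rightarrow> (k - p, - p)) \<in> triads lam" if "x \<in> triads lam" for x
      using that by (cases x) (auto simp: mem_triads Lam3_uminus)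
    show "(case case x of (k, p) \<Rightarrow> (k - p, - p) of (k, p) \<Rightarrow> (k - p, - p)) = x"
      for x :: "(real^3) \<times> (real^3)"
      by (cases x) simp
    show "triad_term a b c x + cnj (triad_term a c b (case x of (k, p) \<Rightarrow> (k - p, - p))) = 0"
      if "x \<in> triads lam" for x
      using that assms(4,5) by (cases x) (auto simp: mem_triads intro: triad_term_antisym)
  qed
  then show ?thesis
    using inner_field_adv(2)[OF assms(1-3)] inner_field_adv(2)[OF assms(1,3,2)] by simp
qed

lemma inner_field_adv_self_eq_0:
  assumes "l1_h1 lam a" "l1_h1 lam c" "reality_vec lam c" "\<forall>p\<in>Lam3 lam. divergence a p = 0"
  shows "inner_field lam (adv lam a c) c = 0"
proof -
  have summable: "triad_term a c c summable_on triads lam"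
    by (rule triad_term_summable[OF assms(1,2,2)])
  have "infsum (triad_term a c c) (triads lam) + infsum (triad_term a c c) (triads lam) = 0"
  proof (rule infsum_add_eq_0_if_involution[OF summable summable, where \<sigma> = "\<lambda>(k, p). (p - k, p)"])
    show "(case x of (k, p) \<Rightarrow> (p - k, p)) \<in> triads lam" if "x \<in> triads lam" for x
      using that by (cases x) (auto simp: mem_triads dest: Lam3_uminus)
    show "(case case x of (k, p) \<Rightarrow> (p - k, p) of (k, p) \<Rightarrow> (p - k, p)) = x"
      for x :: "(real^3) \<times> (real^3)"
      by (cases x) simp
    show "triad_term a c c x + triad_term a c c (case x of (k, p) \<Rightarrow> (p - k, p)) = 0"
      if "x \<in> triads lam" for x
      using that assms(3,4) by (cases x) (auto simp: mem_triads intro: triad_term_self_cancel)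
  qed
  then show ?thesis
    using inner_field_adv(2)[OF assms(1,2,2)] by simp
qed

lemma inner_field_Euler_rate:
  assumes "\<forall>k\<in>Lam3 lam. divergence h k = 0" "h 0 = 0"
    and euler: "\<forall>k\<in>Lam3 lam. k \<noteq> 0 \<longrightarrow> u' k + adv lam u u k = - grad p k"
  shows "inner_field lam u' h = - inner_field lam (adv lam u u) h"
proof -
  have "cinner (u' k) (h k) = - cinner (adv lam u u k) (h k)" if "k \<in> Lam3 lam" for k
  proof (cases "k = 0")
    case True
    then show ?thesis
      using assms(2) by (simp add: cinner_def)
  next
    case False
    then have "u' k = - grad p k - adv lam u u k"
      using euler that by (simp add: eq_diff_eq)
    then show ?thesis
      using cinner_grad_eq_0[of h k p] assms(1) that by (simp add: cinner_diff_left cinner_uminus_left)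
  qed
  then have "inner_field lam u' h = (\<Sum>\<^sub>\<infinity>k\<in>Lam3 lam. - cinner (adv lam u u k) (h k))"
    unfolding inner_field_eq_infsum_cinner by (rule infsum_cong)
  also have "\<dots> = - inner_field lam (adv lam u u) h"
    unfolding inner_field_eq_infsum_cinner by (rule infsum_uminus)
  finally show ?thesis .
qed

lemma inner_field_induction_rate:
  assumes "l1_h1 lam u" "l1_h1 lam h" "u 0 = 0"
    and induction: "\<forall>k\<in>Lam3 lam. k \<noteq> 0 \<longrightarrow> h' k + adv lam u h k - adv lam h u k = 0"
  shows "inner_field lam h' u = inner_field lam (adv lam h u) u - inner_field lam (adv lam u h) u"
proof -
  have "cinner (h' k) (u k) = cinner (adv lam h u k) (u k) - cinner (adv lam u h k) (u k)"
    if "k \<in> Lam3 lam" for k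
  proof (cases "k = 0")
    case True
    then show ?thesis
      using assms(3) by (simp add: cinner_def)
  next
    case False
    then have "h' k = adv lam h u k - adv lam u h k"
      using induction that by (simp add: eq_diff_eq)
    then show ?thesis
      by (simp add: cinner_diff_left)
  qed
  then have "inner_field lam h' u
      = (\<Sum>\<^sub>\<infinity>k\<in>Lam3 lam. cinner (adv lam h u k) (u k) - cinner (adv lam u h k) (u k))"
    unfolding inner_field_eq_infsum_cinner by (rule infsum_cong)
  also have "\<dots> = inner_field lam (adv lam h u) u - inner_field lam (adv lam u h) u"
    unfolding inner_field_eq_infsum_cinner
    by (rule infsum_diff[OF inner_field_adv(1)[OF assms(2,1,1)] inner_field_adv(1)[OF assms(1,2,1)]])
  finally show ?thesis .
qed

lemma cross_correlation_rate_eq_0: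
  fixes u u' h h' :: "real^3 \<Rightarrow> complex^3" and p :: "real^3 \<Rightarrow> complex"
  assumes u: "l1_h1 lam u" "reality_vec lam u" "\<forall>k\<in>Lam3 lam. divergence u k = 0" "u 0 = 0"
    and h: "l1_h1 lam h" "\<forall>k\<in>Lam3 lam. divergence h k = 0" "h 0 = 0"
    and euler: "\<forall>k\<in>Lam3 lam. k \<noteq> 0 \<longrightarrow> u' k + adv lam u u k = - grad p k"
    and induction: "\<forall>k\<in>Lam3 lam. k \<noteq> 0 \<longrightarrow> h' k + adv lam u h k - adv lam h u k = 0"
  shows "inner_field lam u' h + inner_field lam u h' = 0"
proof -
  have "inner_field lam u' h = - inner_field lam (adv lam u u) h"
    by (rule inner_field_Euler_rate[OF h(2,3) euler])
  moreover have "inner_field lam h' u = inner_field lam (adv lam h u) u - inner_field lam (adv lam u h) u"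
    by (rule inner_field_induction_rate[OF u(1) h(1) u(4) induction])
  moreover have "inner_field lam (adv lam u u) h + cnj (inner_field lam (adv lam u h) u) = 0"
    by (rule inner_field_adv_antisym[OF u(1) u(1) h(1) u(2,3)])
  moreover have "inner_field lam (adv lam h u) u = 0"
    by (rule inner_field_adv_self_eq_0[OF h(1) u(1) u(2) h(2)])
  ultimately show ?thesis
    using cnj_inner_field[of lam h' u] by (simp add: add_eq_0_iff)
qed

section \<open>Time derivative of the cross-correlation\<close>

definition l2_has_derivative :: "real \<Rightarrow> (real \<Rightarrow> real^3 \<Rightarrow> complex^3) \<Rightarrow> (real^3 \<Rightarrow> complex^3)
                                   \<Rightarrow> real \<Rightarrow> real set \<Rightarrow> bool" where
  "l2_has_derivative lam a a' t S \<longleftrightarrow>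
     ((\<lambda>s. l2_norm_sq lam (\<lambda>k. (a s k - a t k) /\<^sub>R (s - t) - a' k)) \<longlongrightarrow> 0) (at t within S)"

lemma C1_Vm_imp_l2_has_derivative:
  assumes "lam \<ge> 1" "C1_Vm lam m T u u'" "t \<in> time_int T"
  shows "l2_has_derivative lam u (u' t) t (time_int T)"
proof -
  define e where "e s = (\<lambda>k. (u s k - u t k) /\<^sub>R (s - t) - u' t k)" for s
  have "((\<lambda>s. hm_norm lam m (e s)) \<longlongrightarrow> 0) (at t within time_int T)"
    using assms(2,3) unfolding C1_Vm_def e_def by blast
  from tendsto_power[OF this, of 2]
  have hm_tendsto: "((\<lambda>s. (hm_norm lam m (e s))\<^sup>2) \<longlongrightarrow> 0) (at t within time_int T)"
    by simp
  have le: "l2_norm_sq lam (e s) \<le> (hm_norm lam m (e s))\<^sup>2" if "s \<in> time_int T" for s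
  proof (rule l2_norm_sq_le_hm_norm[OF assms(1)])
    have V: "Vm lam m (u s)" "Vm lam m (u t)" "Vm lam m (u' t)"
      using assms(2,3) that unfolding C1_Vm_def by auto
    then have hm: "hm_finite lam m (u s)" "hm_finite lam m (u t)" "hm_finite lam m (u' t)"
      unfolding Vm_def by blast+
    show "hm_finite lam m (e s)"
      unfolding e_def by (intro hm_finite_diff hm_finite_scaleR hm)
    show "e s 0 = 0"
      unfolding e_def using V unfolding Vm_def by simp
  qed
  from tendsto_0_if_bounded_within[OF hm_tendsto le l2_norm_sq_nonneg] show ?thesis
    unfolding l2_has_derivative_def e_def .
qed

lemma l2_has_derivative_imp_tendsto:
  assumes "l2_has_derivative lam a a' t S" "\<forall>s\<in>S. sq_summable lam (a s)" "sq_summable lam a'" "t \<in> S"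
  shows "((\<lambda>s. l2_norm_sq lam (\<lambda>k. a s k - a t k)) \<longlongrightarrow> 0) (at t within S)"
proof -
  define e where "e s = (\<lambda>k. (a s k - a t k) /\<^sub>R (s - t) - a' k)" for s
  have "((\<lambda>s. (s - t)\<^sup>2 * (2 * l2_norm_sq lam (e s) + 2 * l2_norm_sq lam a')) \<longlongrightarrow>
          (t - t)\<^sup>2 * (2 * 0 + 2 * l2_norm_sq lam a')) (at t within S)"
    using assms(1) unfolding l2_has_derivative_def e_def by (intro tendsto_intros)
  then have bound: "((\<lambda>s. (s - t)\<^sup>2 * (2 * l2_norm_sq lam (e s) + 2 * l2_norm_sq lam a')) \<longlongrightarrow> 0)
                      (at t within S)"
    by simp
  have le: "l2_norm_sq lam (\<lambda>k. a s k - a t k)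
      \<le> (s - t)\<^sup>2 * (2 * l2_norm_sq lam (e s) + 2 * l2_norm_sq lam a')" if "s \<in> S" for s
  proof (cases "s = t")
    case True
    then show ?thesis
      by (simp add: l2_norm_sq_def)
  next
    case False
    then have "(\<lambda>k. a s k - a t k) = (\<lambda>k. (s - t) *\<^sub>R (e s k + a' k))"
      unfolding e_def by simp
    moreover have "sq_summable lam (e s)"
      unfolding e_def using assms(2-4) that by (intro sq_summable_diff sq_summable_scaleR) auto
    then have "l2_norm_sq lam (\<lambda>k. e s k + a' k) \<le> 2 * l2_norm_sq lam (e s) + 2 * l2_norm_sq lam a'"
      using assms(3) by (rule l2_norm_sq_add_le)
    ultimately show ?thesis
      by (simp add: l2_norm_sq_scaleR mult_left_mono)
  qed
  from tendsto_0_if_bounded_within[OF bound le l2_norm_sq_nonneg] show ?thesis .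
qed

lemma inner_field_has_vector_derivative:
  assumes a: "l2_has_derivative lam a a' t S" and b: "l2_has_derivative lam b b' t S"
    and summable: "\<forall>s\<in>S. sq_summable lam (a s) \<and> sq_summable lam (b s)"
    and "sq_summable lam a'" "sq_summable lam b'" "t \<in> S"
  shows "((\<lambda>s. inner_field lam (a s) (b s)) has_vector_derivative
           inner_field lam a' (b t) + inner_field lam (a t) b') (at t within S)"
proof (rule has_vector_derivative_if_difference_quotient)
  define da where "da s = (\<lambda>k. (a s k - a t k) /\<^sub>R (s - t))" for s
  define db where "db s = (\<lambda>k. (b s k - b t k) /\<^sub>R (s - t))" for s
  have at: "sq_summable lam (a t)" "sq_summable lam (b t)"
    using summable \<open>t \<in> S\<close> by auto
  have diff_summable: "sq_summable lam (da s)" "sq_summable lam (db s)" "sq_summable lam (b s)"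
    if "s \<in> S" for s
  proof -
    have s: "sq_summable lam (a s)" "sq_summable lam (b s)"
      using summable that by auto
    then show "sq_summable lam (da s)" "sq_summable lam (db s)" "sq_summable lam (b s)"
      unfolding da_def db_def by (intro sq_summable_scaleR sq_summable_diff s at)+
  qed
  have quotient: "(inner_field lam (a s) (b s) - inner_field lam (a t) (b t)) /\<^sub>R (s - t)
      = inner_field lam (da s) (b s) + inner_field lam (a t) (db s)" if "s \<in> S" for s
  proof -
    have s: "sq_summable lam (a s)" "sq_summable lam (b s)"
      using summable that by auto
    have left: "inner_field lam (da s) (b s)
        = (inner_field lam (a s) (b s) - inner_field lam (a t) (b s)) /\<^sub>R (s - t)"
      unfolding da_def inner_field_scaleR_left inner_field_diff_left[OF s(1) at(1) s(2)]
      by (simp add: scaleR_conv_of_real)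
    have right: "inner_field lam (a t) (db s)
        = (inner_field lam (a t) (b s) - inner_field lam (a t) (b t)) /\<^sub>R (s - t)"
      unfolding db_def inner_field_scaleR_right inner_field_diff_right[OF at(1) s(2) at(2)]
      by (simp add: scaleR_conv_of_real)
    show ?thesis
      unfolding left right by (simp add: algebra_simps)
  qed
  have "((\<lambda>s. inner_field lam (da s) (b s) + inner_field lam (a t) (db s))
          \<longlongrightarrow> inner_field lam a' (b t) + inner_field lam (a t) b') (at t within S)"
  proof (intro tendsto_add tendsto_inner_field)
    show "((\<lambda>s. l2_norm_sq lam (\<lambda>k. da s k - a' k)) \<longlongrightarrow> 0) (at t within S)"
      using a unfolding l2_has_derivative_def da_def .
    show "((\<lambda>s. l2_norm_sq lam (\<lambda>k. db s k - b' k)) \<longlongrightarrow> 0) (at t within S)"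
      using b unfolding l2_has_derivative_def db_def .
    show "((\<lambda>s. l2_norm_sq lam (\<lambda>k. b s k - b t k)) \<longlongrightarrow> 0) (at t within S)"
      using l2_has_derivative_imp_tendsto[OF b] summable assms(5,6) by auto
    show "((\<lambda>s. l2_norm_sq lam (\<lambda>k. a t k - a t k)) \<longlongrightarrow> 0) (at t within S)"
      by (simp add: l2_norm_sq_def)
  qed (use diff_summable at assms(4,5) in \<open>auto simp: eventually_at_filter intro!: always_eventually\<close>)
  moreover have "\<forall>\<^sub>F s in at t within S. inner_field lam (da s) (b s) + inner_field lam (a t) (db s)
      = (inner_field lam (a s) (b s) - inner_field lam (a t) (b t)) /\<^sub>R (s - t)"
    using quotient by (auto simp: eventually_at_filter intro!: always_eventually)
  ultimately show "((\<lambda>s. (inner_field lam (a s) (b s) - inner_field lam (a t) (b t)) /\<^sub>R (s - t))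
               \<longlongrightarrow> inner_field lam a' (b t) + inner_field lam (a t) b') (at t within S)"
    by (rule Lim_transform_eventually)
qed

lemma convex_time_int: "convex (time_int T)"
  unfolding is_interval_convex_1[symmetric] is_interval_1 time_int_def
  by (auto intro: order_trans le_less_trans[rotated])

lemma cross_correlation_has_derivative_0:
  fixes u u' h h' :: "real \<Rightarrow> real^3 \<Rightarrow> complex^3" and P :: "real^3 \<Rightarrow> complex"
  assumes lam: "lam > 1" and m: "m \<ge> 1"
    and u_C1: "C1_Vm lam m T u u'" and h_C1: "C1_Vm lam m T h h'"
    and euler: "\<forall>k\<in>Lam3 lam. k \<noteq> 0 \<longrightarrow> u' t k + adv lam (u t) (u t) k = - grad P k"
    and h_eq: "\<forall>k\<in>Lam3 lam. k \<noteq> 0 \<longrightarrow> h' t k + adv lam (u t) (h t) k - adv lam (h t) (u t) k = 0"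
    and t: "t \<in> time_int T"
  shows "((\<lambda>s. inner_field lam (u s) (h s)) has_derivative (\<lambda>_. 0)) (at t within time_int T)"
proof -
  have lam': "lam \<ge> 1"
    using lam by simp
  have V: "Vm lam m (u s)" "Vm lam m (u' s)" "Vm lam m (h s)" "Vm lam m (h' s)"
    if "s \<in> time_int T" for s
    using u_C1 h_C1 that unfolding C1_Vm_def by auto
  have "inner_field lam (u' t) (h t) + inner_field lam (u t) (h' t) = 0"
  proof (rule cross_correlation_rate_eq_0[OF _ _ _ _ _ _ _ euler h_eq])
    show "l1_h1 lam (u t)" "l1_h1 lam (h t)"
      using V[OF t] by (blast intro: Vm_imp_l1_h1[OF lam m])+
    show "reality_vec lam (u t)" "\<forall>k\<in>Lam3 lam. divergence (u t) k = 0" "u t 0 = 0"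
      "\<forall>k\<in>Lam3 lam. divergence (h t) k = 0" "h t 0 = 0"
      using V[OF t] unfolding Vm_def by blast+
  qed
  moreover have "((\<lambda>s. inner_field lam (u s) (h s)) has_vector_derivative
      inner_field lam (u' t) (h t) + inner_field lam (u t) (h' t)) (at t within time_int T)"
  proof (rule inner_field_has_vector_derivative)
    show "l2_has_derivative lam u (u' t) t (time_int T)"
      by (rule C1_Vm_imp_l2_has_derivative[OF lam' u_C1 t])
    show "l2_has_derivative lam h (h' t) t (time_int T)"
      by (rule C1_Vm_imp_l2_has_derivative[OF lam' h_C1 t])
  qed (use t in \<open>auto intro: Vm_imp_sq_summable[OF lam'] V\<close>)
  ultimately show ?thesis
    by (simp add: has_vector_derivative_def)
qed

theorem theorem6:
  fixes lam :: real and m :: nat and T :: ereal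
    and u u' h h' :: "real \<Rightarrow> real^3 \<Rightarrow> complex^3"
    and p :: "real \<Rightarrow> real^3 \<Rightarrow> complex"
  assumes lam: "admissible_lambda lam"
    and m: "m \<ge> 1"
    and u_C1: "C1_Vm lam m T u u'"
    and p_real: "\<forall>t \<in> time_int T. reality_scal lam (p t)"
    and euler: "\<forall>t \<in> time_int T. \<forall>k \<in> Lam3 lam. k \<noteq> 0 \<longrightarrow>
                  u' t k + adv lam (u t) (u t) k = - grad (p t) k"
    and h_C1: "C1_Vm lam m T h h'"
    and h_eq: "\<forall>t \<in> time_int T. \<forall>k \<in> Lam3 lam. k \<noteq> 0 \<longrightarrow>
                  h' t k + adv lam (u t) (h t) k - adv lam (h t) (u t) k = 0"
  shows "\<forall>t1 \<in> time_int T. \<forall>t2 \<in> time_int T.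
           inner_field lam (u t1) (h t1) = inner_field lam (u t2) (h t2)"
proof -
  have "lam > 1"
    using lam by (rule admissible_lambda_gt_1)
  have "((\<lambda>s. inner_field lam (u s) (h s)) has_derivative (\<lambda>_. 0)) (at t within time_int T)"
    if "t \<in> time_int T" for t
    using bspec[OF euler that] bspec[OF h_eq that] that
    by (rule cross_correlation_has_derivative_0[OF \<open>lam > 1\<close> m u_C1 h_C1])
  then obtain c where "\<forall>t\<in>time_int T. inner_field lam (u t) (h t) = c"
    using has_derivative_zero_constant[OF convex_time_int] by blast
  then show ?thesis
    by simp
qed

end
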